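(* Let $\Xi_h=\{v\in X_h: b_h(v,q)=0\ \text{for all } q\in M_h\}$. There exists a constant $\alpha>0$ such that $s_h(v,v)\ge\alpha\|v\|_*^2$ for all $v\in\Xi_h$.
   Context: Let $\Omega\subset\mathbb R^2$ be an open bounded domain with Lipschitz boundary, with coefficients $a_{ij}$ ($i,j=1,2$, forming a symmetric positive definite uniformly bounded tensor) and $c$ (non-positive, uniformly bounded). $\mathcal T_h$ is a shape-regular polygonal partition of $\Omega$, $h_T=\operatorname{diam}T$, $\mathcal E_h$ all edges, $\mathcal E_h^0$ interior edges. For an integer $k\ge2$, $X_h$ (resp. $M_h$) consists of functions that are polynomials of degree $\le k$ (resp. $\le k-2$) on each $T\in\mathcal T_h$. $Q_{k-2}$ is the $L^2$ projection onto $M_h$. Jumps: $[\![v]\!]=v|_{T_1}-v|_{T_2}$ on an interior edge $e=\partial T_1\cap\partial T_2$, $[\![v]\!]=v$ on a boundary edge; $[\![\nabla v]\!]$ analogously on interior edges. $s_h(u,v)=\sum_{e\in\mathcal E_h}h_T^{-3}\langle[\![u]\!],[\![v]\!]\rangle_e+\sum_{e\in\mathcal E_h^0}h_T^{-1}\langle[\![\nabla u]\!],[\![\nabla v]\!]\rangle_e$ ($h_T$ the diameter of an element containing $e$). $b_h(v,q)=\sum_{T}\big(\sum_{i,j=1}^2a_{ij}\partial^2_{ij}v+cv,q\big)_T$. $\|v\|_*=\big(\sum_{T}\|Q_{k-2}(\sum_{i,j}a_{ij}\partial^2_{ij}v+cv)\|_T^2+s_h(v,v)\big)^{1/2}$.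 *)

theory Defs
  imports "HOL-Analysis.Analysis"
begin

type_synonym pt = "real \<times> real"

definition rot :: "real \<Rightarrow> pt \<Rightarrow> pt" where
  "rot th z = (cos th * fst z - sin th * snd z, sin th * fst z + cos th * snd z)"

definition lipschitz_boundary :: "pt set \<Rightarrow> bool" where
  "lipschitz_boundary \<Omega> \<longleftrightarrow>
     (\<forall>x\<in>frontier \<Omega>. \<exists>r>0. \<exists>th. \<exists>L. \<exists>g::real\<Rightarrow>real.
        (\<forall>s t. \<bar>g s - g t\<bar> \<le> L * \<bar>s - t\<bar>) \<and>
        \<Omega> \<inter> ball x r = {y \<in> ball x r. snd (rot th (y - x)) > g (fst (rot th (y - x)))})"

definition poly2 :: "nat \<Rightarrow> (pt \<Rightarrow> real) \<Rightarrow> bool" where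
  "poly2 n p \<longleftrightarrow> (\<exists>cf :: nat \<Rightarrow> nat \<Rightarrow> real.
      \<forall>x y. p (x, y) = (\<Sum>i\<le>n. \<Sum>j\<le>n - i. cf i j * x ^ i * y ^ j))"

definition pd :: "nat \<Rightarrow> (pt \<Rightarrow> real) \<Rightarrow> pt \<Rightarrow> real" where
  "pd l f z = (if l = 1 then deriv (\<lambda>t. f (t, snd z)) (fst z)
               else deriv (\<lambda>t. f (fst z, t)) (snd z))"

definition seg :: "pt \<times> pt \<Rightarrow> pt set" where
  "seg e = closed_segment (fst e) (snd e)"

definition elems :: "pt set set \<Rightarrow> pt \<times> pt \<Rightarrow> pt set set" where
  "elems \<T> e = {T \<in> \<T>. seg e \<subseteq> frontier T}"

definition interior_edges :: "pt set set \<Rightarrow> (pt \<times> pt) set \<Rightarrow> (pt \<times> pt) set" where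
  "interior_edges \<T> E = {e \<in> E. card (elems \<T> e) = 2}"

definition polygonal_partition :: "pt set \<Rightarrow> pt set set \<Rightarrow> (pt \<times> pt) set \<Rightarrow> bool" where
  "polygonal_partition \<Omega> \<T> E \<longleftrightarrow>
     finite \<T> \<and> finite E \<and>
     (\<forall>T\<in>\<T>. open T \<and> T \<noteq> {} \<and> T \<subseteq> \<Omega>) \<and>
     (\<forall>T\<in>\<T>. \<forall>T'\<in>\<T>. T \<noteq> T' \<longrightarrow> T \<inter> T' = {}) \<and>
     closure \<Omega> = \<Union> (closure ` \<T>) \<and>
     (\<forall>T\<in>\<T>. frontier T = \<Union> {seg e | e. e \<in> E \<and> seg e \<subseteq> frontier T}) \<and>
     (\<forall>e\<in>E. fst e \<noteq> snd e) \<and>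
     (\<forall>e\<in>E. \<forall>e'\<in>E. e \<noteq> e' \<longrightarrow> finite (seg e \<inter> seg e') \<and> card (seg e \<inter> seg e') \<le> 1) \<and>
     (\<forall>e\<in>E. (card (elems \<T> e) = 1 \<and> seg e \<subseteq> frontier \<Omega>) \<or> card (elems \<T> e) = 2)"

definition shape_regular :: "real \<Rightarrow> pt set set \<Rightarrow> bool" where
  "shape_regular \<rho> \<T> \<longleftrightarrow> (\<forall>T\<in>\<T>. \<exists>x r. r > 0 \<and> ball x r \<subseteq> T \<and> diameter T \<le> \<rho> * r)"

definition el1 :: "pt set set \<Rightarrow> pt \<times> pt \<Rightarrow> pt set" where
  "el1 \<T> e = (SOME T. T \<in> elems \<T> e)"

definition el2 :: "pt set set \<Rightarrow> pt \<times> pt \<Rightarrow> pt set" where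
  "el2 \<T> e = (SOME T. T \<in> elems \<T> e - {el1 \<T> e})"

definition hE :: "pt set set \<Rightarrow> pt \<times> pt \<Rightarrow> real" where
  "hE \<T> e = diameter (el1 \<T> e)"

text \<open>Piecewise functions are given elementwise: v T is the (polynomial) piece on T.
  Jump across an edge (on boundary edges: the trace itself).\<close>
definition jump :: "pt set set \<Rightarrow> (pt set \<Rightarrow> pt \<Rightarrow> real) \<Rightarrow> pt \<times> pt \<Rightarrow> pt \<Rightarrow> real" where
  "jump \<T> v e x = (if card (elems \<T> e) = 2 then v (el1 \<T> e) x - v (el2 \<T> e) x
                   else v (el1 \<T> e) x)"

definition eint :: "pt \<times> pt \<Rightarrow> (pt \<Rightarrow> real) \<Rightarrow> real" where
  "eint e f = integral {0..1} (\<lambda>t. f (fst e + t *\<^sub>R (snd e - fst e))) * dist (fst e) (snd e)"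

definition s_h :: "pt set set \<Rightarrow> (pt \<times> pt) set \<Rightarrow> (pt set \<Rightarrow> pt \<Rightarrow> real)
                   \<Rightarrow> (pt set \<Rightarrow> pt \<Rightarrow> real) \<Rightarrow> real" where
  "s_h \<T> E u v =
     (\<Sum>e\<in>E. 1 / hE \<T> e ^ 3 * eint e (\<lambda>x. jump \<T> u e x * jump \<T> v e x)) +
     (\<Sum>e\<in>interior_edges \<T> E. 1 / hE \<T> e *
        eint e (\<lambda>x. \<Sum>l\<in>{1,2}. jump \<T> (\<lambda>T. pd l (u T)) e x * jump \<T> (\<lambda>T. pd l (v T)) e x))"

definition Lop :: "(nat \<Rightarrow> nat \<Rightarrow> pt \<Rightarrow> real) \<Rightarrow> (pt \<Rightarrow> real) \<Rightarrow> (pt \<Rightarrow> real) \<Rightarrow> pt \<Rightarrow> real" where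
  "Lop a c p x = (\<Sum>i\<in>{1,2}. \<Sum>j\<in>{1,2}. a i j x * pd i (pd j p) x) + c x * p x"

definition b_h :: "(nat \<Rightarrow> nat \<Rightarrow> pt \<Rightarrow> real) \<Rightarrow> (pt \<Rightarrow> real) \<Rightarrow> pt set set
                   \<Rightarrow> (pt set \<Rightarrow> pt \<Rightarrow> real) \<Rightarrow> (pt set \<Rightarrow> pt \<Rightarrow> real) \<Rightarrow> real" where
  "b_h a c \<T> v q = (\<Sum>T\<in>\<T>. integral T (\<lambda>x. Lop a c (v T) x * q T x))"

definition Qproj :: "nat \<Rightarrow> pt set \<Rightarrow> (pt \<Rightarrow> real) \<Rightarrow> pt \<Rightarrow> real" where
  "Qproj m T w = (THE q. poly2 m q \<and>
      (\<forall>r. poly2 m r \<longrightarrow> integral T (\<lambda>x. (w x - q x) * r x) = 0))"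

definition star_norm :: "(nat \<Rightarrow> nat \<Rightarrow> pt \<Rightarrow> real) \<Rightarrow> (pt \<Rightarrow> real) \<Rightarrow> nat \<Rightarrow> pt set set
                   \<Rightarrow> (pt \<times> pt) set \<Rightarrow> (pt set \<Rightarrow> pt \<Rightarrow> real) \<Rightarrow> real" where
  "star_norm a c k \<T> E v = sqrt
     ((\<Sum>T\<in>\<T>. integral T (\<lambda>x. (Qproj (k - 2) T (Lop a c (v T)) x)\<^sup>2)) + s_h \<T> E v v)"

definition Xh :: "nat \<Rightarrow> pt set set \<Rightarrow> (pt set \<Rightarrow> pt \<Rightarrow> real) set" where
  "Xh k \<T> = {v. \<forall>T\<in>\<T>. poly2 k (v T)}"

definition Mh :: "nat \<Rightarrow> pt set set \<Rightarrow> (pt set \<Rightarrow> pt \<Rightarrow> real) set" where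
  "Mh k \<T> = {q. \<forall>T\<in>\<T>. poly2 (k - 2) (q T)}"

definition Xi_h :: "(nat \<Rightarrow> nat \<Rightarrow> pt \<Rightarrow> real) \<Rightarrow> (pt \<Rightarrow> real) \<Rightarrow> nat \<Rightarrow> pt set set
                   \<Rightarrow> (pt set \<Rightarrow> pt \<Rightarrow> real) set" where
  "Xi_h a c k \<T> = {v \<in> Xh k \<T>. \<forall>q\<in>Mh k \<T>. b_h a c \<T> v q = 0}"

end

theory Submission
  imports Defs
begin

text \<open>On \<open>\<Xi>\<^sub>h\<close> the residual \<open>\<Sum> a\<^sub>i\<^sub>j d\<^sup>2\<^sub>i\<^sub>j v + c v\<close> is, element by element, orthogonal to
  all polynomials of degree \<open>k - 2\<close>, so its projection \<open>Q\<^sub>k\<^sub>-\<^sub>2\<close> vanishes and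
  \<open>\<parallel>v\<parallel>\<^sub>*\<^sup>2 = s\<^sub>h(v, v)\<close>: the constant \<open>\<alpha> = 1\<close> works. Since the projection is defined as
  a unique solution, one has to show that \<open>0\<close> is the only candidate: a polynomial with
  \<open>\<integral>\<^sub>T q\<^sup>2 = 0\<close> vanishes on a box inside the open element \<open>T\<close>, hence everywhere.\<close>

text \<open>Degrees are bounded separately in each variable, so that closure under partial
  derivatives needs no degree bookkeeping.\<close>
definition bivariate_polynomial :: "(pt \<Rightarrow> real) \<Rightarrow> bool" where
  "bivariate_polynomial f \<longleftrightarrow>
     (\<exists>N1 N2 (cf::nat\<Rightarrow>nat\<Rightarrow>real). \<forall>x y. f (x,y) = (\<Sum>i<N1. \<Sum>j<N2. cf i j * x^i * y^j))"

lemma poly2_imp_bivariate_polynomial: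
  assumes "poly2 n p" shows "bivariate_polynomial p"
proof -
  obtain cf where cf: "\<And>x y. p (x, y) = (\<Sum>i\<le>n. \<Sum>j\<le>n - i. cf i j * x ^ i * y ^ j)"
    using assms unfolding poly2_def by blast
  define cf' where "cf' i j = (if j \<le> n - i then cf i j else 0)" for i j
  have row: "(\<Sum>j\<le>n - i. cf i j * x ^ i * y ^ j) = (\<Sum>j<Suc n. cf' i j * x^i * y^j)" for i x y
  proof -
    have "(\<Sum>j<Suc n. cf' i j * x^i * y^j) = (\<Sum>j<Suc n. if j \<le> n - i then cf i j * x^i * y^j else 0)"
      unfolding cf'_def by (rule sum.cong) auto
    also have "\<dots> = (\<Sum>j\<in>{j\<in>{..<Suc n}. j \<le> n - i}. cf i j * x^i * y^j)"
      by (rule sum.inter_filter[symmetric]) simp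
    also have "{j\<in>{..<Suc n}. j \<le> n - i} = {..n-i}" by auto
    finally show ?thesis by simp
  qed
  have "p (x,y) = (\<Sum>i<Suc n. \<Sum>j<Suc n. cf' i j * x^i * y^j)" for x y
    unfolding cf row lessThan_Suc_atMost ..
  then show ?thesis unfolding bivariate_polynomial_def by blast
qed

lemma deriv_polyfun:
  "deriv (\<lambda>t::real. \<Sum>i<N. A i * t^i) x = (\<Sum>i<N-1. of_nat (Suc i) * A (Suc i) * x^i)"
proof -
  have "((\<lambda>t::real. \<Sum>i<N. A i * t^i) has_field_derivative (\<Sum>i<N. A i * (of_nat i * x^(i-1)))) (at x)"
    by (auto intro!: derivative_eq_intros sum.cong simp: mult_ac)
  then have "deriv (\<lambda>t::real. \<Sum>i<N. A i * t^i) x = (\<Sum>i<N. A i * (of_nat i * x^(i-1)))"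
    using DERIV_imp_deriv by blast
  also have "\<dots> = (\<Sum>i<N-1. of_nat (Suc i) * A (Suc i) * x^i)"
  proof (cases N)
    case (Suc M)
    then show ?thesis by (simp only: sum.lessThan_Suc_shift) (simp add: algebra_simps)
  qed simp
  finally show ?thesis .
qed

lemma bivariate_polynomial_pd:
  assumes "bivariate_polynomial f" shows "bivariate_polynomial (pd l f)"
proof -
  obtain N1 N2 cf where cf: "\<And>x y. f (x,y) = (\<Sum>i<N1. \<Sum>j<N2. cf i j * x^i * y^j)"
    using assms unfolding bivariate_polynomial_def by blast
  show ?thesis
  proof (cases "l = 1")
    case True
    have "pd l f (x,y) = (\<Sum>i<N1-1. \<Sum>j<N2. (of_nat (Suc i) * cf (Suc i) j) * x^i * y^j)" for x y
    proof -
      have "(\<lambda>t. f (t, y)) = (\<lambda>t. \<Sum>i<N1. (\<Sum>j<N2. cf i j * y^j) * t^i)"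
        by (simp add: cf sum_distrib_left mult_ac)
      then have "pd l f (x,y) = deriv (\<lambda>t. \<Sum>i<N1. (\<Sum>j<N2. cf i j * y^j) * t^i) x"
        using True by (simp add: pd_def)
      also have "\<dots> = (\<Sum>i<N1-1. of_nat (Suc i) * (\<Sum>j<N2. cf (Suc i) j * y^j) * x^i)"
        by (rule deriv_polyfun)
      finally show ?thesis by (simp add: sum_distrib_left sum_distrib_right mult_ac)
    qed
    then show ?thesis unfolding bivariate_polynomial_def
      by (intro exI[of _ "N1-1"] exI[of _ N2] exI[where x="\<lambda>i j. of_nat (Suc i) * cf (Suc i) j"]) simp
  next
    case False
    have "pd l f (x,y) = (\<Sum>i<N1. \<Sum>j<N2-1. (of_nat (Suc j) * cf i (Suc j)) * x^i * y^j)" for x y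
    proof -
      have "(\<lambda>t. f (x, t)) = (\<lambda>t. \<Sum>j<N2. (\<Sum>i<N1. cf i j * x^i) * t^j)"
        by (simp add: cf sum_distrib_left mult_ac sum.swap[of _ "{..<N1}"])
      then have "pd l f (x,y) = deriv (\<lambda>t. \<Sum>j<N2. (\<Sum>i<N1. cf i j * x^i) * t^j) y"
        using False by (simp add: pd_def)
      also have "\<dots> = (\<Sum>j<N2-1. of_nat (Suc j) * (\<Sum>i<N1. cf i (Suc j) * x^i) * y^j)"
        by (rule deriv_polyfun)
      finally show ?thesis
        by (simp add: sum_distrib_left sum_distrib_right mult_ac sum.swap[of _ "{..<N1}"])
    qed
    then show ?thesis unfolding bivariate_polynomial_def
      by (intro exI[of _ N1] exI[of _ "N2-1"] exI[where x="\<lambda>i j. of_nat (Suc j) * cf i (Suc j)"]) simp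
  qed
qed

lemma continuous_on_bivariate_polynomial:
  assumes "bivariate_polynomial f" shows "continuous_on S f"
proof -
  obtain N1 N2 cf where cf: "\<And>x y. f (x,y) = (\<Sum>i<N1. \<Sum>j<N2. cf i j * x^i * y^j)"
    using assms unfolding bivariate_polynomial_def by blast
  have "f = (\<lambda>z. \<Sum>i<N1. \<Sum>j<N2. cf i j * fst z^i * snd z^j)"
    by (rule ext) (metis cf prod.collapse)
  then show ?thesis by (simp add: continuous_intros)
qed

lemma bivariate_polynomial_bounded_on:
  assumes "bivariate_polynomial f" "bounded T" shows "\<exists>B. \<forall>x\<in>T. \<bar>f x\<bar> \<le> B"
proof -
  have "compact (f ` closure T)"
    using assms by (intro compact_continuous_image continuous_on_bivariate_polynomial) auto
  then obtain B where "\<forall>y\<in>f ` closure T. norm y \<le> B" using compact_imp_bounded bounded_iff by metis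
  then show ?thesis using closure_subset by fastforce
qed

lemma bivariate_polynomial_measurable:
  assumes "bivariate_polynomial f" "T \<in> sets lebesgue"
  shows "f \<in> borel_measurable (lebesgue_on T)"
  using assms continuous_on_bivariate_polynomial continuous_imp_measurable_on_sets_lebesgue
    measurable_on_iff_borel_measurable by blast

lemma poly2_eq_0_if_eq_0_on_box:
  assumes "poly2 m q" "a1 < b1" "a2 < b2" "\<forall>x\<in>{a1..b1}. \<forall>y\<in>{a2..b2}. q (x,y) = 0"
  shows "q z = 0"
proof -
  obtain cf where cf: "\<And>x y. q (x, y) = (\<Sum>i\<le>m. \<Sum>j\<le>m - i. cf i j * x ^ i * y ^ j)"
    using assms(1) unfolding poly2_def by blast
  define g where "g i y = (\<Sum>j\<le>m-i. cf i j * y^j)" for i y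
  have qg: "q (x,y) = (\<Sum>i\<le>m. g i y * x^i)" for x y
    by (simp add: cf g_def sum_distrib_left mult_ac)
  have g0: "g i y = 0" if "y \<in> {a2..b2}" "i \<le> m" for y i
  proof -
    have "{a1..b1} \<subseteq> {x. (\<Sum>i\<le>m. g i y * x^i) = 0}" using assms(4) that qg by auto
    then have "infinite {x. (\<Sum>i\<le>m. g i y * x^i) = 0}"
      using infinite_Icc[OF assms(2)] infinite_super by blast
    then show ?thesis using polyfun_finite_roots[of "\<lambda>i. g i y" m] that by auto
  qed
  have cf0: "cf i j = 0" if "i \<le> m" "j \<le> m - i" for i j
  proof -
    have "{a2..b2} \<subseteq> {y. (\<Sum>j\<le>m-i. cf i j * y^j) = 0}" using g0 that unfolding g_def by auto
    then have "infinite {y. (\<Sum>j\<le>m-i. cf i j * y^j) = 0}"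
      using infinite_Icc[OF assms(3)] infinite_super by blast
    then show ?thesis using polyfun_finite_roots[of "cf i" "m-i"] that by auto
  qed
  obtain x y where z: "z = (x,y)" by (cases z)
  show ?thesis unfolding z cf by (auto intro!: sum.neutral simp: cf0)
qed

lemma integrable_on_mult_if_bounded_measurable:
  fixes f g :: "pt \<Rightarrow> real"
  assumes "f \<in> borel_measurable (lebesgue_on T)" "g \<in> borel_measurable (lebesgue_on T)"
    and "T \<in> lmeasurable" and "\<forall>x\<in>T. \<bar>f x\<bar> \<le> B" and "\<forall>x\<in>T. \<bar>g x\<bar> \<le> C"
  shows "(\<lambda>x. f x * g x) integrable_on T"
proof (rule measurable_bounded_by_integrable_imp_integrable_real[where g="\<lambda>_. B * C"])
  show "(\<lambda>x. f x * g x) \<in> borel_measurable (lebesgue_on T)" using assms(1,2) by measurable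
  show "\<bar>f x * g x\<bar> \<le> B * C" if "x \<in> T" for x
  proof -
    have "\<bar>f x\<bar> \<le> B" "\<bar>g x\<bar> \<le> C" using assms(4,5) that by auto
    moreover from this have "0 \<le> B" by linarith
    ultimately show ?thesis unfolding abs_mult by (intro mult_mono) auto
  qed
  show "(\<lambda>_. B * C) integrable_on T" using assms(3) by (rule integrable_on_const)
  show "T \<in> sets lebesgue" using assms(3) by (rule fmeasurableD)
qed

lemma poly2_eq_0_if_integral_square_eq_0:
  assumes T: "open T" "bounded T" "T \<noteq> {}" and q: "poly2 m q"
    and I0: "integral T (\<lambda>x. q x * q x) = 0"
  shows "q = (\<lambda>x. 0)"
proof -
  have pq: "bivariate_polynomial q" using q poly2_imp_bivariate_polynomial by blast
  obtain Bq where Bq: "\<forall>x\<in>T. \<bar>q x\<bar> \<le> Bq" using bivariate_polynomial_bounded_on[OF pq T(2)] by blast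
  have Tm: "T \<in> lmeasurable" using T lmeasurable_open by blast
  have "q \<in> borel_measurable (lebesgue_on T)"
    using bivariate_polynomial_measurable[OF pq] Tm by (simp add: fmeasurableD)
  then have int: "(\<lambda>x. q x * q x) integrable_on T"
    using Tm Bq by (intro integrable_on_mult_if_bounded_measurable)
  obtain z where "z \<in> T" using T(3) by blast
  then obtain a b where ab: "cbox a b \<subseteq> T" "z \<in> box a b" "\<forall>i\<in>Basis. a \<bullet> i < b \<bullet> i"
    using open_contains_cbox[OF T(1)] by metis
  have qc: "continuous_on (cbox a b) (\<lambda>x. q x * q x)"
    using continuous_on_bivariate_polynomial[OF pq] by (intro continuous_on_mult)
  have "integral (cbox a b) (\<lambda>x. q x * q x) \<le> integral T (\<lambda>x. q x * q x)"
    by (rule integral_subset_le[OF ab(1) integrable_continuous[OF qc] int]) simp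
  moreover have "0 \<le> integral (cbox a b) (\<lambda>x. q x * q x)"
    by (rule integral_nonneg[OF integrable_continuous[OF qc]]) simp
  ultimately have "integral (cbox a b) (\<lambda>x. q x * q x) = 0" using I0 by simp
  then have qz: "\<forall>x\<in>cbox a b. q x = 0"
    using integral_cbox_eq_0_iff[OF qc] ab(2) by auto
  obtain a1 a2 b1 b2 where ab_eq: "a = (a1,a2)" "b = (b1,b2)" by fastforce
  then have "a1 < b1" "a2 < b2" using ab(3) by (auto simp: Basis_prod_def)
  moreover have "\<forall>x\<in>{a1..b1}. \<forall>y\<in>{a2..b2}. q (x,y) = 0"
    using qz unfolding ab_eq by (auto simp: cbox_Pair_eq)
  ultimately show ?thesis using poly2_eq_0_if_eq_0_on_box[OF q] by blast
qed

lemma Qproj_eq_0_if_orthogonal: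
  assumes T: "open T" "bounded T" "T \<noteq> {}"
    and wm: "w \<in> borel_measurable (lebesgue_on T)" and wb: "\<forall>x\<in>T. \<bar>w x\<bar> \<le> B"
    and orth: "\<forall>r. poly2 m r \<longrightarrow> integral T (\<lambda>x. w x * r x) = 0"
  shows "Qproj m T w = (\<lambda>x. 0)"
  unfolding Qproj_def
proof (rule the_equality)
  have "poly2 m (\<lambda>x. 0)" unfolding poly2_def by (intro exI[of _ "\<lambda>i j. 0"]) simp
  then show "poly2 m (\<lambda>x. 0) \<and> (\<forall>r. poly2 m r \<longrightarrow> integral T (\<lambda>x. (w x - 0) * r x) = 0)"
    using orth by simp
next
  fix q assume q: "poly2 m q \<and> (\<forall>r. poly2 m r \<longrightarrow> integral T (\<lambda>x. (w x - q x) * r x) = 0)"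
  have pq: "bivariate_polynomial q" using q poly2_imp_bivariate_polynomial by blast
  obtain Bq where Bq: "\<forall>x\<in>T. \<bar>q x\<bar> \<le> Bq" using bivariate_polynomial_bounded_on[OF pq T(2)] by blast
  have Tm: "T \<in> lmeasurable" using T lmeasurable_open by blast
  have qm: "q \<in> borel_measurable (lebesgue_on T)"
    using bivariate_polynomial_measurable[OF pq] Tm by (simp add: fmeasurableD)
  have int: "(\<lambda>x. w x * q x) integrable_on T" "(\<lambda>x. q x * q x) integrable_on T"
    using wm qm Tm wb Bq by (auto intro: integrable_on_mult_if_bounded_measurable)
  have "integral T (\<lambda>x. w x * q x - q x * q x) = 0"
    using q by (simp add: left_diff_distrib)
  moreover have "integral T (\<lambda>x. w x * q x) = 0" using orth q by blast
  ultimately have "integral T (\<lambda>x. q x * q x) = 0" using integral_diff[OF int] by simp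
  then show "q = (\<lambda>x. 0)"
    using poly2_eq_0_if_integral_square_eq_0[OF T] q by blast
qed

lemma set_borel_measurable_restrict_subset:
  fixes f :: "pt \<Rightarrow> real"
  assumes "set_borel_measurable lebesgue \<Omega> f" "T \<subseteq> \<Omega>" "T \<in> sets lebesgue"
  shows "f \<in> borel_measurable (lebesgue_on T)"
proof -
  have "(\<lambda>x. indicator T x * (indicator \<Omega> x *\<^sub>R f x)) \<in> borel_measurable lebesgue"
    using assms unfolding set_borel_measurable_def by measurable
  moreover have "(\<lambda>x. indicator T x * (indicator \<Omega> x *\<^sub>R f x)) = (\<lambda>x. if x \<in> T then f x else 0)"
    using assms(2) by (intro ext) (auto simp: indicator_def)
  ultimately show ?thesis using borel_measurable_if_D by metis
qed

lemma Lop_measurable: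
  assumes "T \<subseteq> \<Omega>" "T \<in> sets lebesgue" and p: "bivariate_polynomial p"
    and am: "\<forall>i\<in>{1,2}. \<forall>j\<in>{1,2}. set_borel_measurable lebesgue \<Omega> (a i j)"
    and cm: "set_borel_measurable lebesgue \<Omega> c"
  shows "Lop a c p \<in> borel_measurable (lebesgue_on T)"
proof -
  have L: "Lop a c p = (\<lambda>x. (\<Sum>i\<in>{1,2}. \<Sum>j\<in>{1,2}. a i j x * pd i (pd j p) x) + c x * p x)"
    by (rule ext) (simp add: Lop_def)
  have a_meas: "i \<in> {1,2} \<Longrightarrow> j \<in> {1,2} \<Longrightarrow> a i j \<in> borel_measurable (lebesgue_on T)" for i j
    using set_borel_measurable_restrict_subset am assms(1,2) by blast
  have c_meas: "c \<in> borel_measurable (lebesgue_on T)"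
    using set_borel_measurable_restrict_subset cm assms(1,2) by blast
  have pd_meas: "pd i (pd j p) \<in> borel_measurable (lebesgue_on T)" for i j
    using assms(2) p by (intro bivariate_polynomial_measurable bivariate_polynomial_pd)
  have p_meas: "p \<in> borel_measurable (lebesgue_on T)"
    using assms(2) p by (intro bivariate_polynomial_measurable)
  show ?thesis unfolding L
    by (intro borel_measurable_add borel_measurable_sum borel_measurable_times
        a_meas c_meas pd_meas p_meas) auto
qed

lemma Lop_bounded_on:
  assumes TO: "T \<subseteq> \<Omega>" and "bounded T" and p: "bivariate_polynomial p"
    and aM: "\<forall>i\<in>{1,2}. \<forall>j\<in>{1,2}. \<forall>x\<in>\<Omega>. \<bar>a i j x\<bar> \<le> Ma"
    and cM: "\<forall>x\<in>\<Omega>. \<bar>c x\<bar> \<le> Mc"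
  shows "\<exists>B. \<forall>x\<in>T. \<bar>Lop a c p x\<bar> \<le> B"
proof -
  have "\<forall>i j. \<exists>B. \<forall>x\<in>T. \<bar>pd i (pd j p) x\<bar> \<le> B"
    using assms(2) p by (blast intro: bivariate_polynomial_bounded_on bivariate_polynomial_pd)
  then obtain Bf where Bf: "\<And>i j x. x \<in> T \<Longrightarrow> \<bar>pd i (pd j p) x\<bar> \<le> Bf i j" by metis
  obtain Bp where Bp: "\<And>x. x \<in> T \<Longrightarrow> \<bar>p x\<bar> \<le> Bp"
    using bivariate_polynomial_bounded_on[OF p assms(2)] by blast
  have "\<bar>Lop a c p x\<bar> \<le> (\<Sum>i\<in>{1,2::nat}. \<Sum>j\<in>{1,2::nat}. \<bar>Ma\<bar> * \<bar>Bf i j\<bar>) + \<bar>Mc\<bar> * \<bar>Bp\<bar>"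
    if x: "x \<in> T" for x
  proof -
    have xO: "x \<in> \<Omega>" using x TO by blast
    have "\<bar>Lop a c p x\<bar> \<le> (\<Sum>i\<in>{1,2}. \<Sum>j\<in>{1,2}. \<bar>a i j x * pd i (pd j p) x\<bar>) + \<bar>c x * p x\<bar>"
      unfolding Lop_def
      by (rule order.trans[OF abs_triangle_ineq add_right_mono])
         (rule order.trans[OF sum_abs sum_mono[OF sum_abs]])
    also have "\<dots> \<le> (\<Sum>i\<in>{1,2::nat}. \<Sum>j\<in>{1,2::nat}. \<bar>Ma\<bar> * \<bar>Bf i j\<bar>) + \<bar>Mc\<bar> * \<bar>Bp\<bar>"
    proof (intro add_mono sum_mono)
      fix i j :: nat assume "i \<in> {1,2}" "j \<in> {1,2}"
      then have "\<bar>a i j x\<bar> \<le> \<bar>Ma\<bar>" "\<bar>pd i (pd j p) x\<bar> \<le> \<bar>Bf i j\<bar>"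
        using aM xO Bf[OF x, of i j] by force+
      then show "\<bar>a i j x * pd i (pd j p) x\<bar> \<le> \<bar>Ma\<bar> * \<bar>Bf i j\<bar>"
        unfolding abs_mult by (simp add: mult_mono)
    next
      have "\<bar>c x\<bar> \<le> \<bar>Mc\<bar>" "\<bar>p x\<bar> \<le> \<bar>Bp\<bar>" using cM xO Bp[OF x] by force+
      then show "\<bar>c x * p x\<bar> \<le> \<bar>Mc\<bar> * \<bar>Bp\<bar>"
        unfolding abs_mult by (simp add: mult_mono)
    qed
    finally show ?thesis .
  qed
  then show ?thesis by blast
qed

lemma Xi_h_orthogonal_on_element:
  assumes v: "v \<in> Xi_h a c k \<T>" and "finite \<T>" "T \<in> \<T>" and r: "poly2 (k - 2) r"
  shows "integral T (\<lambda>x. Lop a c (v T) x * r x) = 0"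
proof -
  define q where "q = (\<lambda>T'. if T' = T then r else (\<lambda>x. 0::real))"
  have "poly2 (k - 2) (\<lambda>x. 0)" unfolding poly2_def by (intro exI[of _ "\<lambda>i j. 0"]) simp
  then have "q \<in> Mh k \<T>" unfolding Mh_def q_def using r by auto
  then have "0 = b_h a c \<T> v q" using v unfolding Xi_h_def by auto
  also have "\<dots> = (\<Sum>T'\<in>\<T>. if T' = T then integral T (\<lambda>x. Lop a c (v T) x * r x) else 0)"
    unfolding b_h_def q_def by (intro sum.cong) auto
  also have "\<dots> = integral T (\<lambda>x. Lop a c (v T) x * r x)"
    using assms(2,3) by simp
  finally show ?thesis by simp
qed

lemma eint_nonneg:
  assumes "\<And>x. 0 \<le> f x" shows "0 \<le> eint e f"
  unfolding eint_def
  by (cases "(\<lambda>t. f (fst e + t *\<^sub>R (snd e - fst e))) integrable_on {0..1}")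
     (auto intro!: mult_nonneg_nonneg integral_nonneg assms simp: not_integrable_integral)

lemma s_h_nonneg:
  assumes "\<forall>e\<in>E. bounded (el1 \<T> e)" shows "0 \<le> s_h \<T> E v v"
proof -
  have "0 \<le> hE \<T> e" if "e \<in> E" for e
    unfolding hE_def using assms that by (simp add: diameter_ge_0)
  then show ?thesis unfolding s_h_def interior_edges_def
    by (intro add_nonneg_nonneg sum_nonneg mult_nonneg_nonneg[OF _ eint_nonneg]) auto
qed

lemma polygonal_partitionD:
  assumes "polygonal_partition \<Omega> \<T> E"
  shows "finite \<T>"
    and "T \<in> \<T> \<Longrightarrow> open T \<and> T \<noteq> {} \<and> T \<subseteq> \<Omega>"
    and "e \<in> E \<Longrightarrow> elems \<T> e \<noteq> {}"
proof -
  have "finite \<T>"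
    using assms unfolding polygonal_partition_def by (elim conjE) assumption
  moreover have "\<forall>T\<in>\<T>. open T \<and> T \<noteq> {} \<and> T \<subseteq> \<Omega>"
    using assms unfolding polygonal_partition_def by (elim conjE) assumption
  moreover have "\<forall>e\<in>E. (card (elems \<T> e) = 1 \<and> seg e \<subseteq> frontier \<Omega>) \<or> card (elems \<T> e) = 2"
    using assms unfolding polygonal_partition_def by (elim conjE) assumption
  ultimately show "finite \<T>" and "T \<in> \<T> \<Longrightarrow> open T \<and> T \<noteq> {} \<and> T \<subseteq> \<Omega>"
    and "e \<in> E \<Longrightarrow> elems \<T> e \<noteq> {}"
    by (fastforce simp del: One_nat_def)+
qed

lemma el1_bounded:
  assumes "polygonal_partition \<Omega> \<T> E" "bounded \<Omega>" "e \<in> E"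
  shows "bounded (el1 \<T> e)"
proof -
  have "el1 \<T> e \<in> elems \<T> e"
    using polygonal_partitionD(3)[OF assms(1,3)] unfolding el1_def by (meson ex_in_conv someI_ex)
  then have "el1 \<T> e \<subseteq> \<Omega>" using polygonal_partitionD(2)[OF assms(1)] unfolding elems_def by blast
  then show ?thesis using assms(2) bounded_subset by blast
qed

lemma star_norm_square_eq_s_h:
  assumes P: "polygonal_partition \<Omega> \<T> E" and "bounded \<Omega>"
    and am: "\<forall>i\<in>{1,2}. \<forall>j\<in>{1,2}. set_borel_measurable lebesgue \<Omega> (a i j)"
    and aM: "\<forall>i\<in>{1,2}. \<forall>j\<in>{1,2}. \<forall>x\<in>\<Omega>. \<bar>a i j x\<bar> \<le> Ma"
    and cm: "set_borel_measurable lebesgue \<Omega> c" and cM: "\<forall>x\<in>\<Omega>. \<bar>c x\<bar> \<le> Mc"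
    and v: "v \<in> Xi_h a c k \<T>"
  shows "(star_norm a c k \<T> E v)\<^sup>2 = s_h \<T> E v v"
proof -
  have "Qproj (k - 2) T (Lop a c (v T)) = (\<lambda>x. 0)" if T: "T \<in> \<T>" for T
  proof -
    have To: "open T" "T \<noteq> {}" "T \<subseteq> \<Omega>" using polygonal_partitionD(2)[OF P T] by auto
    have Tb: "bounded T" using To(3) assms(2) bounded_subset by blast
    have Ts: "T \<in> sets lebesgue" using To(1) Tb lmeasurable_open fmeasurableD by blast
    have pv: "bivariate_polynomial (v T)"
      using v T poly2_imp_bivariate_polynomial unfolding Xi_h_def Xh_def by blast
    obtain B where "\<forall>x\<in>T. \<bar>Lop a c (v T) x\<bar> \<le> B"
      using Lop_bounded_on[OF To(3) Tb pv aM cM] by blast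
    moreover have "\<forall>r. poly2 (k - 2) r \<longrightarrow> integral T (\<lambda>x. Lop a c (v T) x * r x) = 0"
      using Xi_h_orthogonal_on_element[OF v polygonal_partitionD(1)[OF P] T] by blast
    ultimately show ?thesis
      using Qproj_eq_0_if_orthogonal[OF To(1) Tb To(2) Lop_measurable[OF To(3) Ts pv am cm]] by blast
  qed
  then have "(\<Sum>T\<in>\<T>. integral T (\<lambda>x. (Qproj (k - 2) T (Lop a c (v T)) x)\<^sup>2)) = 0"
    by (intro sum.neutral) simp
  moreover have "0 \<le> s_h \<T> E v v"
    using s_h_nonneg el1_bounded[OF P assms(2)] by blast
  ultimately show ?thesis unfolding star_norm_def by simp
qed

theorem lemma3p5:
  fixes \<Omega> :: "pt set" and a :: "nat \<Rightarrow> nat \<Rightarrow> pt \<Rightarrow> real" and c :: "pt \<Rightarrow> real"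
    and k :: nat and \<rho> :: real
  assumes "open \<Omega>" and "connected \<Omega>" and "bounded \<Omega>" and "lipschitz_boundary \<Omega>"
    and "\<forall>i\<in>{1,2}. \<forall>j\<in>{1,2}. \<forall>x\<in>\<Omega>. a i j x = a j i x"
    and "\<exists>lam>0. \<forall>x\<in>\<Omega>. \<forall>\<xi>::nat\<Rightarrow>real.
           (\<Sum>i\<in>{1,2}. \<Sum>j\<in>{1,2}. a i j x * \<xi> i * \<xi> j) \<ge> lam * (\<Sum>i\<in>{1,2}. (\<xi> i)\<^sup>2)"
    and "\<exists>M. \<forall>i\<in>{1,2}. \<forall>j\<in>{1,2}. \<forall>x\<in>\<Omega>. \<bar>a i j x\<bar> \<le> M"
    and "\<forall>i\<in>{1,2}. \<forall>j\<in>{1,2}. set_borel_measurable lebesgue \<Omega> (a i j)"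
    and "\<forall>x\<in>\<Omega>. c x \<le> 0" and "\<exists>M. \<forall>x\<in>\<Omega>. \<bar>c x\<bar> \<le> M"
    and "set_borel_measurable lebesgue \<Omega> c"
    and "k \<ge> 2"
  shows "\<exists>\<alpha>>0. \<forall>\<T> E. polygonal_partition \<Omega> \<T> E \<and> shape_regular \<rho> \<T> \<longrightarrow>
           (\<forall>v\<in>Xi_h a c k \<T>. s_h \<T> E v v \<ge> \<alpha> * (star_norm a c k \<T> E v)\<^sup>2)"
proof -
  obtain Ma where aM: "\<forall>i\<in>{1,2}. \<forall>j\<in>{1,2}. \<forall>x\<in>\<Omega>. \<bar>a i j x\<bar> \<le> Ma"
    using assms(7) by blast
  obtain Mc where cM: "\<forall>x\<in>\<Omega>. \<bar>c x\<bar> \<le> Mc" using assms(10) by blast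
  have "1 * (star_norm a c k \<T> E v)\<^sup>2 \<le> s_h \<T> E v v"
    if "polygonal_partition \<Omega> \<T> E" "v \<in> Xi_h a c k \<T>" for \<T> E v
    using star_norm_square_eq_s_h[OF that(1) assms(3,8) aM assms(11) cM that(2)] by simp
  then show ?thesis using zero_less_one by blast
qed

end
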